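(* Let $S$ be a system of dimension $m\ge2$ with Hamiltonian $H_S$, maximal energy $E^S_{\max}$, Gibbs state $\tau_S$ and partition function $Z_S=\mathrm{tr}(e^{-\beta H_S})$, and let $\Pi^S_{\max}=|E^S_{\max}\rangle\langle E^S_{\max}|$ be a pure eigenstate of energy $E^S_{\max}$. Let the catalyst $C$ have a Hamiltonian $H_C$ with discrete spectrum consisting of nonnegative eigenvalues $E^C_1\le E^C_2\le\cdots$ (with multiplicity), $E^C_j\to\infty$, and finite partition function $Z_C=\sum_j e^{-\beta E^C_j}<\infty$. Let $\omega_C,\omega'_C$ be catalyst states diagonal in the eigenbasis of $H_C$, such that $\omega_C\otimes\tau_S\to\omega'_C\otimes\Pi^S_{\max}$ is possible by catalytic thermal operations, and such that $\omega_C$ has average energy $\mathrm{tr}(\omega_CH_C)\le E$ for a finite constant $E\ge E^C_1$. Then $$d_{\rm opt}:=\tfrac12\|\omega_C-\omega'_C\|_1\ \ge\ \frac12\,\frac{f(A)^2\varepsilon_C^2}{Z_C}>0,$$ where $A=Z_S/e^{-\beta E^S_{\max}}$, $f(a)=\frac12\frac{a^2}{a^2+1}$, $\varepsilon_C=\sup_{W\in(0,1)}W\gamma^{E^C_{j(W)}}$ with $\gamma=e^{-\beta}$, and $j(W)=\min\{j\ge1: E^C_{j+1}>E/(1-W)\}$.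
   Context: $\beta>0$ is the inverse temperature of the bath. A transformation $\rho\to\rho'$ on a system with Gibbs state $\tau$ being possible by catalytic thermal operations implies (known fact, may be assumed) that $D_\alpha(\rho\|\tau)\ge D_\alpha(\rho'\|\tau)$ for all $\alpha\ge0$; here the relevant system is $CS$ with Gibbs state $\tau_C\otimes\tau_S$, $\tau_C=e^{-\beta H_C}/Z_C$. For commuting states with eigenvalue vectors $p,q$, $D_\alpha(p\|q)=\frac{1}{\alpha-1}\log\sum_ip_i^\alpha q_i^{1-\alpha}$; in particular $D_{1/2}(p\|q)=-2\log\sum_i\sqrt{p_iq_i}$. For diagonal catalysts with eigenvalues $\omega_j,\omega'_j$ the $\alpha=1/2$ condition reads $\sum_j\sqrt{\omega'_j}\,e^{-\beta E^C_j/2}\ge\sqrt{A}\sum_j\sqrt{\omega_j}\,e^{-\beta E^C_j/2}$. *)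

theory Defs
  imports "HOL-Analysis.Analysis"
begin

text \<open>Natural log is used; the base is irrelevant for monotonicity statements.\<close>
definition renyi_div :: "real \<Rightarrow> ('a \<Rightarrow> real) \<Rightarrow> ('a \<Rightarrow> real) \<Rightarrow> 'a set \<Rightarrow> real" where
  "renyi_div \<alpha> p q I = 1 / (\<alpha> - 1) * ln (infsum (\<lambda>x. p x powr \<alpha> * q x powr (1 - \<alpha>)) I)"

definition fA :: "real \<Rightarrow> real" where
  "fA a = 1/2 * (a^2 / (a^2 + 1))"

text \<open>j(W) = min { j : E_{j+1} > E/(1-W) } for a 0-indexed spectrum E_C 0 \<le> E_C 1 \<le> ...
  (the paper's index j \<ge> 1 corresponds to our index j-1 \<ge> 0).\<close>
definition jW :: "(nat \<Rightarrow> real) \<Rightarrow> real \<Rightarrow> real \<Rightarrow> nat" where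
  "jW EC Eb W = (LEAST j. EC (Suc j) > Eb / (1 - W))"

definition epsC :: "real \<Rightarrow> (nat \<Rightarrow> real) \<Rightarrow> real \<Rightarrow> real" where
  "epsC \<beta> EC Eb = (SUP W\<in>{0<..<1}. W * exp (-\<beta>) powr EC (jW EC Eb W))"

end

theory Submission
  imports Defs
begin

(* Write F(p, q) = sum_j sqrt (p_j q_j) for the Bhattacharyya coefficient (classical
   fidelity), g for the catalyst Gibbs distribution and A = Z_S / exp (-beta E_max).
   (1) For product weights the order-1/2 Renyi divergence is -2 ln F, and F factorizes;
       monotonicity of D_{1/2} under the transition therefore gives
       sqrt A * F(omega, g) <= F(omega', g).
   (2) A Markov-inequality argument on the energy constraint shows that omega puts mass
       at least W on the levels j <= j(W); hence epsilon_C <= sqrt Z_C * F(omega, g).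
   (3) Cauchy-Schwarz plus (sqrt a - sqrt b)^2 <= |a - b| give
       (F(omega', g) - F(omega, g))^2 <= ||omega - omega'||_1.
   (4) An elementary inequality f(A) <= sqrt A - 1 for A >= 2 combines (1)-(3). *)


definition bhatt :: "(nat \<Rightarrow> real) \<Rightarrow> (nat \<Rightarrow> real) \<Rightarrow> real" where
  "bhatt p q = (\<Sum>j. sqrt (p j * q j))"

(* By AM-GM, sqrt (p q) <= (p + q) / 2, so the coefficient of two summable sequences
   is a convergent series. *)
lemma summable_sqrt_mult:
  fixes p q :: "nat \<Rightarrow> real"
  assumes "\<And>j. 0 \<le> p j" "\<And>j. 0 \<le> q j" "summable p" "summable q"
  shows "summable (\<lambda>j. sqrt (p j * q j))"
proof (rule summable_comparison_test')
  show "summable (\<lambda>j. (p j + q j) / 2)"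
    using assms(3,4) by (intro summable_divide summable_add)
  show "norm (sqrt (p j * q j)) \<le> (p j + q j) / 2" for j
    using arith_geo_mean_sqrt[of "p j" "q j"] assms(1,2)[of j] by simp
qed

lemma bhatt_pos:
  fixes p q :: "nat \<Rightarrow> real"
  assumes "\<And>j. 0 \<le> p j" "p sums 1" "\<And>j. 0 < q j" "summable (\<lambda>j. sqrt (p j * q j))"
  shows "0 < bhatt p q"
proof -
  have "\<exists>j. 0 < p j"
  proof (rule ccontr)
    assume "\<not> (\<exists>j. 0 < p j)"
    then have "p = (\<lambda>_. 0)" using assms(1) by (intro ext) (meson antisym not_le)
    then show False using assms(2) sums_zero sums_unique2 by fastforce
  qed
  then obtain j where "0 < p j" ..
  then have "0 < sqrt (p j * q j)" using assms(3) by simp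
  then show ?thesis unfolding bhatt_def
    by (rule suminf_pos2[OF assms(4), rotated]) (simp add: assms(1) less_imp_le[OF assms(3)])
qed

lemma bhatt_scale:
  fixes p q :: "nat \<Rightarrow> real"
  assumes "summable (\<lambda>j. sqrt (p j * q j))"
  shows "bhatt p (\<lambda>j. q j / c) = bhatt p q / sqrt c"
  unfolding bhatt_def using suminf_divide[OF assms, of "sqrt c"]
  by (simp add: real_sqrt_divide)

lemma bhatt_prob:
  fixes p q :: "nat \<Rightarrow> real"
  assumes p: "\<And>j. 0 \<le> p j" "p sums 1" and q: "\<And>j. 0 < q j" "q sums 1"
  shows "summable (\<lambda>j. sqrt (p j * q j))" "0 < bhatt p q"
proof -
  show summable: "summable (\<lambda>j. sqrt (p j * q j))"
    using p q by (intro summable_sqrt_mult) (auto simp: sums_iff less_imp_le)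
  show "0 < bhatt p q" by (rule bhatt_pos[OF p q(1) summable])
qed

lemma suminf_Cauchy_Schwarz:
  fixes a b :: "nat \<Rightarrow> real"
  assumes a2: "summable (\<lambda>j. (a j)\<^sup>2)" and b2: "summable (\<lambda>j. (b j)\<^sup>2)"
  shows "summable (\<lambda>j. a j * b j)"
    and "(\<Sum>j. a j * b j)\<^sup>2 \<le> (\<Sum>j. (a j)\<^sup>2) * (\<Sum>j. (b j)\<^sup>2)"
proof -
  show ab: "summable (\<lambda>j. a j * b j)"
  proof (rule summable_comparison_test')
    show "summable (\<lambda>j. ((a j)\<^sup>2 + (b j)\<^sup>2) / 2)"
      using a2 b2 by (intro summable_divide summable_add)
    show "norm (a j * b j) \<le> ((a j)\<^sup>2 + (b j)\<^sup>2) / 2" for j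
      using sum_squares_bound[of "\<bar>a j\<bar>" "\<bar>b j\<bar>"] by (simp add: abs_mult)
  qed
  have "(\<Sum>i<n. a i * b i)\<^sup>2 \<le> (\<Sum>j. (a j)\<^sup>2) * (\<Sum>j. (b j)\<^sup>2)" for n
  proof -
    have "(\<Sum>i<n. a i * b i)\<^sup>2 \<le> (\<Sum>i<n. (a i)\<^sup>2) * (\<Sum>i<n. (b i)\<^sup>2)"
      by (rule Cauchy_Schwarz_ineq_sum)
    also have "\<dots> \<le> (\<Sum>j. (a j)\<^sup>2) * (\<Sum>j. (b j)\<^sup>2)"
      using a2 b2 by (intro mult_mono sum_le_suminf sum_nonneg suminf_nonneg) auto
    finally show ?thesis .
  qed
  moreover have "(\<lambda>n. (\<Sum>i<n. a i * b i)\<^sup>2) \<longlonglongrightarrow> (\<Sum>j. a j * b j)\<^sup>2"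
    by (intro tendsto_power summable_LIMSEQ ab)
  ultimately show "(\<Sum>j. a j * b j)\<^sup>2 \<le> (\<Sum>j. (a j)\<^sup>2) * (\<Sum>j. (b j)\<^sup>2)"
    by (intro LIMSEQ_le_const2) auto
qed

lemma sqrt_diff_sq_le_abs_diff:
  fixes x y :: real
  assumes "0 \<le> x" "0 \<le> y"
  shows "(sqrt x - sqrt y)\<^sup>2 \<le> \<bar>x - y\<bar>"
proof -
  have sum_bound: "\<bar>sqrt x - sqrt y\<bar> \<le> sqrt x + sqrt y" using assms by (simp add: abs_le_iff)
  have "(sqrt x - sqrt y)\<^sup>2 = \<bar>sqrt x - sqrt y\<bar> * \<bar>sqrt x - sqrt y\<bar>"
    by (simp add: power2_eq_square)
  also have "\<dots> \<le> \<bar>sqrt x - sqrt y\<bar> * (sqrt x + sqrt y)"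
    by (rule mult_left_mono[OF sum_bound abs_ge_zero])
  also have "\<dots> = \<bar>(sqrt x - sqrt y) * (sqrt x + sqrt y)\<bar>"
    using assms by (simp add: abs_mult)
  also have "(sqrt x - sqrt y) * (sqrt x + sqrt y) = x - y"
    using assms by (simp add: algebra_simps)
  finally show ?thesis .
qed

lemma bhatt_gap_le_l1:
  fixes p p' q :: "nat \<Rightarrow> real"
  assumes p: "\<And>j. 0 \<le> p j" "summable p" and p': "\<And>j. 0 \<le> p' j" "summable p'"
    and q: "\<And>j. 0 \<le> q j" "q sums 1"
  shows "(bhatt p' q - bhatt p q)\<^sup>2 \<le> (\<Sum>j. \<bar>p j - p' j\<bar>)"
proof -
  define d where "d j = sqrt (p' j) - sqrt (p j)" for j
  have l1: "summable (\<lambda>j. \<bar>p j - p' j\<bar>)"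
  proof (rule summable_comparison_test')
    show "summable (\<lambda>j. p j + p' j)" using p(2) p'(2) by (rule summable_add)
    show "norm \<bar>p j - p' j\<bar> \<le> p j + p' j" for j using p(1)[of j] p'(1)[of j] by simp
  qed
  have d2: "(d j)\<^sup>2 \<le> \<bar>p j - p' j\<bar>" for j
    unfolding d_def using sqrt_diff_sq_le_abs_diff[OF p'(1) p(1), of j] by (simp add: abs_minus_commute)
  have d2_summable: "summable (\<lambda>j. (d j)\<^sup>2)"
    by (rule summable_comparison_test'[OF l1]) (simp add: d2)
  have q_summable: "summable q" using q(2) by (simp add: sums_iff)
  have q2: "(\<lambda>j. (sqrt (q j))\<^sup>2) sums 1" using q by simp
  have gap: "bhatt p' q - bhatt p q = (\<Sum>j. d j * sqrt (q j))"
    unfolding bhatt_def d_def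
    using suminf_diff[OF summable_sqrt_mult[OF p'(1) q(1) p'(2) q_summable]
        summable_sqrt_mult[OF p(1) q(1) p(2) q_summable]] q
    by (simp add: real_sqrt_mult left_diff_distrib sums_iff)
  have "(bhatt p' q - bhatt p q)\<^sup>2 \<le> (\<Sum>j. (d j)\<^sup>2) * (\<Sum>j. (sqrt (q j))\<^sup>2)"
    unfolding gap using suminf_Cauchy_Schwarz(2)[where b = "\<lambda>j. sqrt (q j)", OF d2_summable] q2
    by (auto simp: sums_iff)
  also have "\<dots> \<le> (\<Sum>j. \<bar>p j - p' j\<bar>)"
    using q2 suminf_le[OF d2 d2_summable l1] by (simp add: sums_iff)
  finally show ?thesis .
qed

lemma renyi_div_half:
  assumes "\<And>x. x \<in> I \<Longrightarrow> 0 \<le> p x" "\<And>x. x \<in> I \<Longrightarrow> 0 \<le> q x"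
  shows "renyi_div (1/2) p q I = -2 * ln (infsum (\<lambda>x. sqrt (p x * q x)) I)"
proof -
  have "infsum (\<lambda>x. p x powr (1/2) * q x powr (1 - 1/2)) I = infsum (\<lambda>x. sqrt (p x * q x)) I"
    by (rule infsum_cong) (simp add: assms powr_half_sqrt real_sqrt_mult)
  then show ?thesis by (simp add: renyi_div_def)
qed

lemma infsum_times_finite:
  fixes f :: "nat \<Rightarrow> real" and c :: "'b \<Rightarrow> real"
  assumes f: "\<And>j. 0 \<le> f j" "summable f" and c: "\<And>i. 0 \<le> c i" and S: "finite S"
  shows "infsum (\<lambda>(j, i). f j * c i) (UNIV \<times> S) = (\<Sum>j. f j) * (\<Sum>i\<in>S. c i)"
proof -
  have rows: "((\<lambda>i. (\<lambda>(j, i). f j * c i) (j, i)) has_sum (f j * (\<Sum>i\<in>S. c i))) S" for j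
    using S by (simp add: has_sum_finiteI sum_distrib_left)
  have cols: "((\<lambda>j. f j * (\<Sum>i\<in>S. c i)) has_sum ((\<Sum>j. f j) * (\<Sum>i\<in>S. c i))) UNIV"
    using f by (intro has_sum_cmult_left sums_nonneg_imp_has_sum summable_sums)
  have "(\<lambda>(j, i). f j * c i) summable_on Sigma UNIV (\<lambda>_. S)"
    using rows cols f c by (intro summable_on_SigmaI) (auto simp: has_sum_iff)
  then have "((\<lambda>(j, i). f j * c i) has_sum ((\<Sum>j. f j) * (\<Sum>i\<in>S. c i))) (UNIV \<times> S)"
    by (rule has_sum_SigmaI[OF rows cols])
  then show ?thesis by (rule infsumI)
qed

(* Step (1): if D_{1/2} does not increase from omega (x) tau to omega' (x) |k><k|, relative
   to g (x) tau, then the catalyst overlap grows by the factor 1 / sqrt (tau k). *)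
lemma bhatt_gain_from_renyi:
  fixes \<tau> g \<omega> \<omega>' :: "nat \<Rightarrow> real"
  assumes \<tau>: "\<And>i. 0 \<le> \<tau> i" "(\<Sum>i<m. \<tau> i) = 1" "k < m" "0 < \<tau> k"
    and g: "\<And>j. 0 \<le> g j"
    and \<omega>: "\<And>j. 0 \<le> \<omega> j" "summable (\<lambda>j. sqrt (\<omega> j * g j))" "0 < bhatt \<omega> g"
    and \<omega>': "\<And>j. 0 \<le> \<omega>' j" "summable (\<lambda>j. sqrt (\<omega>' j * g j))" "0 < bhatt \<omega>' g"
    and renyi: "renyi_div (1/2) (\<lambda>(j, i). \<omega>' j * (if i = k then 1 else 0)) (\<lambda>(j, i). g j * \<tau> i)
                  (UNIV \<times> {..<m})
              \<le> renyi_div (1/2) (\<lambda>(j, i). \<omega> j * \<tau> i) (\<lambda>(j, i). g j * \<tau> i) (UNIV \<times> {..<m})"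
  shows "bhatt \<omega> g \<le> sqrt (\<tau> k) * bhatt \<omega>' g"
proof -
  have "infsum (\<lambda>x. sqrt ((case x of (j, i) \<Rightarrow> \<omega> j * \<tau> i) * (case x of (j, i) \<Rightarrow> g j * \<tau> i)))
          (UNIV \<times> {..<m}) = infsum (\<lambda>(j, i). sqrt (\<omega> j * g j) * \<tau> i) (UNIV \<times> {..<m})"
  proof (rule infsum_cong, clarsimp)
    fix j i
    have "\<omega> j * \<tau> i * (g j * \<tau> i) = (\<omega> j * g j) * (\<tau> i)\<^sup>2"
      by (simp add: power2_eq_square)
    then show "sqrt (\<omega> j * \<tau> i * (g j * \<tau> i)) = sqrt (\<omega> j * g j) * \<tau> i"
      using \<tau>(1)[of i] by (simp add: real_sqrt_mult)
  qed
  also have "\<dots> = bhatt \<omega> g"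
    by (subst infsum_times_finite) (use \<omega> \<tau> g in \<open>auto simp: bhatt_def\<close>)
  finally have source: "renyi_div (1/2) (\<lambda>(j, i). \<omega> j * \<tau> i) (\<lambda>(j, i). g j * \<tau> i) (UNIV \<times> {..<m})
      = -2 * ln (bhatt \<omega> g)"
    by (subst renyi_div_half) (auto simp: \<omega>(1) g \<tau>(1))
  have "infsum (\<lambda>x. sqrt ((case x of (j, i) \<Rightarrow> \<omega>' j * (if i = k then 1 else 0))
          * (case x of (j, i) \<Rightarrow> g j * \<tau> i))) (UNIV \<times> {..<m})
      = infsum (\<lambda>(j, i). sqrt (\<omega>' j * g j) * (if i = k then sqrt (\<tau> i) else 0)) (UNIV \<times> {..<m})"
    by (rule infsum_cong) (auto simp: real_sqrt_mult ac_simps)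
  also have "\<dots> = bhatt \<omega>' g * sqrt (\<tau> k)"
    by (subst infsum_times_finite) (use \<omega>' \<tau> g in \<open>auto simp: bhatt_def\<close>)
  finally have target: "renyi_div (1/2) (\<lambda>(j, i). \<omega>' j * (if i = k then 1 else 0))
      (\<lambda>(j, i). g j * \<tau> i) (UNIV \<times> {..<m}) = -2 * ln (sqrt (\<tau> k) * bhatt \<omega>' g)"
    by (subst renyi_div_half) (auto simp: \<omega>'(1) g \<tau>(1) mult.commute)
  have "ln (bhatt \<omega> g) \<le> ln (sqrt (\<tau> k) * bhatt \<omega>' g)"
    using renyi unfolding source target by simp
  then show ?thesis using \<omega>(3) \<omega>'(3) \<tau>(4) by simp
qed

lemma markov_tail:
  fixes \<omega> E :: "nat \<Rightarrow> real"
  assumes \<omega>: "\<And>j. 0 \<le> \<omega> j" "summable \<omega>"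
    and E: "\<And>j. 0 \<le> E j" "summable (\<lambda>j. \<omega> j * E j)"
    and tail: "\<And>n. t \<le> E (n + N)"
  shows "t * (\<Sum>n. \<omega> (n + N)) \<le> (\<Sum>j. \<omega> j * E j)"
proof -
  have tail_summable: "summable (\<lambda>n. \<omega> (n + N) * E (n + N))"
    using summable_ignore_initial_segment[OF E(2)] .
  have "t * (\<Sum>n. \<omega> (n + N)) = (\<Sum>n. t * \<omega> (n + N))"
    using summable_ignore_initial_segment[OF \<omega>(2)] by (simp add: suminf_mult)
  also have "\<dots> \<le> (\<Sum>n. \<omega> (n + N) * E (n + N))"
    using summable_ignore_initial_segment[OF \<omega>(2)] tail_summable tail \<omega>(1)
    by (intro suminf_le summable_mult) (auto simp: mult.commute intro: mult_right_mono)
  also have "\<dots> \<le> (\<Sum>j. \<omega> j * E j)"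
    using suminf_split_initial_segment[OF E(2), of N] \<omega>(1) E(1)
    by (simp add: sum_nonneg)
  finally show ?thesis .
qed

(* j(W) is well defined: the spectrum eventually exceeds every threshold. *)
lemma jW_exceeds:
  assumes "filterlim EC at_top sequentially"
  shows "Eb / (1 - W) < EC (Suc (jW EC Eb W))"
proof -
  have "eventually (\<lambda>n. Eb / (1 - W) < EC n) sequentially"
    using assms by (simp add: filterlim_at_top_dense)
  then obtain N where "\<forall>n\<ge>N. Eb / (1 - W) < EC n"
    by (auto simp: eventually_at_top_linorder)
  then have "Eb / (1 - W) < EC (Suc N)" by simp
  then show ?thesis unfolding jW_def by (rule LeastI)
qed

lemma window_mass:
  fixes \<omega> EC :: "nat \<Rightarrow> real"
  assumes \<omega>: "\<And>j. 0 \<le> \<omega> j" "\<omega> sums 1"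
    and EC: "\<And>j. 0 \<le> EC j" "mono EC" "filterlim EC at_top sequentially"
    and energy: "summable (\<lambda>j. \<omega> j * EC j)" "(\<Sum>j. \<omega> j * EC j) \<le> Eb"
    and Eb: "0 \<le> Eb" and W: "W < 1"
  shows "W \<le> (\<Sum>i<Suc (jW EC Eb W). \<omega> i)"
proof -
  define J where "J = Suc (jW EC Eb W)"
  have "Eb < (1 - W) * EC J"
    using jW_exceeds[OF EC(3), of Eb W] W unfolding J_def by (simp add: divide_less_eq mult.commute)
  then have "0 < (1 - W) * EC J" using Eb by linarith
  then have t_pos: "0 < EC J" using W by (simp add: zero_less_mult_iff)
  have "EC J \<le> EC (n + J)" for n using EC(2) by (simp add: mono_def)
  then have "EC J * (\<Sum>n. \<omega> (n + J)) \<le> Eb"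
    using markov_tail[OF \<omega>(1) _ EC(1) energy(1)] \<omega>(2) energy(2) by (force simp: sums_iff)
  also note \<open>Eb < (1 - W) * EC J\<close>
  finally have "(\<Sum>n. \<omega> (n + J)) < 1 - W" using t_pos by (simp add: mult.commute)
  moreover have "1 = (\<Sum>n. \<omega> (n + J)) + (\<Sum>i<J. \<omega> i)"
    using suminf_split_initial_segment[of \<omega> J] \<omega>(2) by (simp add: sums_iff)
  ultimately show ?thesis unfolding J_def by linarith
qed

lemma le_one_of_sums_one:
  fixes p :: "nat \<Rightarrow> real"
  assumes "\<And>j. 0 \<le> p j" "p sums 1"
  shows "p i \<le> 1"
  using sum_le_suminf[of p "{i}"] assms by (auto simp: sums_iff)

(* Step (2) for a fixed W: the mass W in the window, each level weighted by at most
   gamma^(E_j(W)), is bounded by the overlap with the unnormalized Gibbs weights. *)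
lemma window_bound:
  fixes \<omega> EC :: "nat \<Rightarrow> real"
  assumes \<beta>: "0 \<le> \<beta>"
    and \<omega>: "\<And>j. 0 \<le> \<omega> j" "\<omega> sums 1"
    and EC: "\<And>j. 0 \<le> EC j" "mono EC" "filterlim EC at_top sequentially"
    and Z: "summable (\<lambda>j. exp (- \<beta> * EC j))"
    and energy: "summable (\<lambda>j. \<omega> j * EC j)" "(\<Sum>j. \<omega> j * EC j) \<le> Eb"
    and Eb: "0 \<le> Eb" and W: "W < 1"
  shows "W * exp (-\<beta>) powr EC (jW EC Eb W) \<le> bhatt \<omega> (\<lambda>j. exp (- \<beta> * EC j))"
proof -
  define J where "J = jW EC Eb W"
  have term_bound: "\<omega> i * exp (-\<beta>) powr EC J \<le> sqrt (\<omega> i * exp (- \<beta> * EC i))" if "i \<le> J" for i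
  proof -
    have "\<omega> i \<le> sqrt (\<omega> i)"
      using \<omega>(1)[of i] le_one_of_sums_one[OF \<omega>, of i] by (intro real_le_rsqrt) (simp add: power2_eq_square mult_left_le)
    moreover have "exp (-\<beta>) powr EC J \<le> sqrt (exp (- \<beta> * EC i))"
    proof -
      have "EC i \<le> EC J" using EC(2) that by (simp add: mono_def)
      then have "\<beta> * EC i \<le> \<beta> * EC J" using \<beta> by (rule mult_left_mono)
      moreover have "0 \<le> \<beta> * EC i" using \<beta> EC(1)[of i] by simp
      ultimately have "- \<beta> * EC J \<le> - \<beta> * EC i / 2" by linarith
      moreover have "sqrt (exp (- \<beta> * EC i)) = exp (- \<beta> * EC i / 2)"
        by (rule real_sqrt_unique) (simp_all add: power2_eq_square exp_add[symmetric])
      ultimately show ?thesis by (simp add: powr_def ac_simps)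
    qed
    ultimately show ?thesis
      using \<omega>(1)[of i] by (simp add: real_sqrt_mult mult_mono)
  qed
  have "W * exp (-\<beta>) powr EC J \<le> (\<Sum>i<Suc J. \<omega> i) * exp (-\<beta>) powr EC J"
    using window_mass[OF \<omega> EC energy Eb W] unfolding J_def by (simp add: mult_right_mono)
  also have "\<dots> \<le> (\<Sum>i<Suc J. sqrt (\<omega> i * exp (- \<beta> * EC i)))"
    unfolding sum_distrib_right by (intro sum_mono term_bound) simp
  also have "\<dots> \<le> bhatt \<omega> (\<lambda>j. exp (- \<beta> * EC j))"
    unfolding bhatt_def using \<omega> Z
    by (intro sum_le_suminf summable_sqrt_mult) (auto simp: sums_iff)
  finally show ?thesis unfolding J_def .
qed

lemma epsC_le_bhatt:
  fixes \<omega> EC :: "nat \<Rightarrow> real"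
  assumes "0 \<le> \<beta>" "\<And>j. 0 \<le> \<omega> j" "\<omega> sums 1"
    and "\<And>j. 0 \<le> EC j" "mono EC" "filterlim EC at_top sequentially"
    and "summable (\<lambda>j. exp (- \<beta> * EC j))"
    and "summable (\<lambda>j. \<omega> j * EC j)" "(\<Sum>j. \<omega> j * EC j) \<le> Eb" "0 \<le> Eb"
  shows "epsC \<beta> EC Eb \<le> bhatt \<omega> (\<lambda>j. exp (- \<beta> * EC j))"
  unfolding epsC_def by (rule cSUP_least) (use window_bound[OF assms] in auto)

(* epsilon_C is positive (the supremand is positive and bounded by 1). *)
lemma epsC_pos:
  fixes EC :: "nat \<Rightarrow> real"
  assumes "0 \<le> \<beta>" "\<And>j. 0 \<le> EC j"
  shows "0 < epsC \<beta> EC Eb"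
proof -
  have "exp (-\<beta>) powr EC j \<le> 1" for j
    using assms by (simp add: powr_def)
  then have "bdd_above ((\<lambda>W. W * exp (-\<beta>) powr EC (jW EC Eb W)) ` {0<..<1})"
    by (intro bdd_aboveI2[where M = 1]) (auto intro: mult_le_one)
  then have "1/2 * exp (-\<beta>) powr EC (jW EC Eb (1/2)) \<le> epsC \<beta> EC Eb"
    unfolding epsC_def by (rule cSUP_upper[rotated]) simp
  moreover have "0 < 1/2 * exp (-\<beta>) powr EC (jW EC Eb (1/2))" by simp
  ultimately show ?thesis by linarith
qed

(* Since E_max is the largest system energy, A = Z_S / exp (-beta E_max) is at least the
   dimension of the system. *)
lemma gibbs_ratio_ge_dim:
  fixes \<beta> :: real and ES :: "nat \<Rightarrow> real"
  assumes "0 \<le> \<beta>" "k < m" "ES k = Max (ES ` {..<m})"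
  shows "real m \<le> (\<Sum>l<m. exp (- \<beta> * ES l)) / exp (- \<beta> * ES k)"
proof -
  have "ES l \<le> ES k" if "l < m" for l
    unfolding assms(3) using that by (intro Max_ge) auto
  then have "(\<Sum>l<m. exp (- \<beta> * ES k)) \<le> (\<Sum>l<m. exp (- \<beta> * ES l))"
    using assms(1) by (intro sum_mono) (simp add: mult_left_mono)
  then show ?thesis by (simp add: le_divide_eq)
qed

lemma thermal_system_weights:
  fixes \<beta> :: real and ES :: "nat \<Rightarrow> real"
  assumes "0 \<le> \<beta>" "2 \<le> m" "k < m" "ES k = Max (ES ` {..<m})"
  defines "ZS \<equiv> \<Sum>l<m. exp (- \<beta> * ES l)"
  shows "\<And>i. 0 \<le> exp (- \<beta> * ES i) / ZS" "(\<Sum>i<m. exp (- \<beta> * ES i) / ZS) = 1"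
    "2 \<le> ZS / exp (- \<beta> * ES k)"
proof -
  have "0 < ZS" unfolding ZS_def using assms(2) by (intro sum_pos) (auto simp: lessThan_empty_iff)
  then show "\<And>i. 0 \<le> exp (- \<beta> * ES i) / ZS" "(\<Sum>i<m. exp (- \<beta> * ES i) / ZS) = 1"
    by (auto simp: sum_divide_distrib[symmetric] ZS_def)
  show "2 \<le> ZS / exp (- \<beta> * ES k)"
    using gibbs_ratio_ge_dim[OF assms(1,3,4)] assms(2) unfolding ZS_def by simp
qed

lemma fA_pos: "A \<noteq> 0 \<Longrightarrow> 0 < fA A"
  unfolding fA_def by (simp add: add_nonneg_pos)

(* Step (4): f(A) <= sqrt A - 1 once A >= 2; after clearing denominators this is the
   polynomial inequality (3A^2 + 2)^2 <= A (2A^2 + 2)^2. *)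
lemma fA_le_sqrt_minus_one:
  fixes A :: real
  assumes "2 \<le> A"
  shows "fA A \<le> sqrt A - 1"
proof -
  have "0 < A\<^sup>2 + 1" by (simp add: add_nonneg_pos)
  then have "A\<^sup>2 + 1 \<noteq> 0" "2 * A\<^sup>2 + 2 \<noteq> 0" by auto
  then have "fA A + 1 = (3 * A\<^sup>2 + 2) / (2 * A\<^sup>2 + 2)"
    unfolding fA_def by (simp add: field_simps)
  also have "\<dots> \<le> sqrt A"
  proof (rule real_le_rsqrt)
    obtain t where t: "0 \<le> t" "A = 2 + t" using assms by (metis add.commute diff_add_cancel diff_ge_0_iff_ge)
    have "(3 * A\<^sup>2 + 2)\<^sup>2 \<le> A * (2 * A\<^sup>2 + 2)\<^sup>2"
      unfolding t(2) using t(1) by (simp add: power2_eq_square algebra_simps)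
    then show "((3 * A\<^sup>2 + 2) / (2 * A\<^sup>2 + 2))\<^sup>2 \<le> A"
      using assms by (simp add: power_divide divide_le_eq add_nonneg_pos)
  qed
  finally show ?thesis by simp
qed

lemma normalized_weights:
  fixes e :: "nat \<Rightarrow> real"
  assumes "\<And>j. 0 < e j" "summable e"
  shows "0 < (\<Sum>l. e l)" "\<And>j. 0 < e j / (\<Sum>l. e l)" "(\<lambda>j. e j / (\<Sum>l. e l)) sums 1"
proof -
  show Z: "0 < (\<Sum>l. e l)" using assms by (intro suminf_pos) auto
  then show "\<And>j. 0 < e j / (\<Sum>l. e l)" using assms(1) by simp
  have "(\<lambda>j. e j / (\<Sum>l. e l)) sums ((\<Sum>l. e l) / (\<Sum>l. e l))"
    using assms(2) by (intro sums_divide summable_sums)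
  then show "(\<lambda>j. e j / (\<Sum>l. e l)) sums 1" using Z by simp
qed

lemma distance_from_overlap_gain:
  fixes A x y \<epsilon> c D :: real
  assumes A: "2 \<le> A" and gain: "sqrt A * x \<le> y" and x: "\<epsilon> / c \<le> x"
    and pos: "0 < \<epsilon>" "0 < c" and l1: "(y - x)\<^sup>2 \<le> D"
  shows "(fA A)\<^sup>2 * \<epsilon>\<^sup>2 / c\<^sup>2 \<le> D"
proof -
  have f: "0 < fA A" using fA_pos[of A] A by simp
  have "fA A * (\<epsilon> / c) \<le> fA A * x" using x f by (intro mult_left_mono) auto
  also have "\<dots> \<le> (sqrt A - 1) * x"
    using fA_le_sqrt_minus_one[OF A] x pos by (intro mult_right_mono) (auto intro: order_trans[rotated])
  also have "\<dots> \<le> y - x" using gain by (simp add: algebra_simps)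
  finally have "(fA A * (\<epsilon> / c))\<^sup>2 \<le> (y - x)\<^sup>2"
    using f pos by (intro power_mono) auto
  with l1 show ?thesis by (simp add: power_divide power_mult_distrib)
qed

theorem mainTheorem8:
  fixes \<beta> :: real and m :: nat and ES :: "nat \<Rightarrow> real" and k :: nat
    and EC :: "nat \<Rightarrow> real" and \<omega> \<omega>' :: "nat \<Rightarrow> real" and Eb :: real
  assumes beta_pos: "\<beta> > 0"
    and m_ge: "m \<ge> 2"
    and k_max: "k < m" "ES k = Max (ES ` {..<m})"
    and EC_nonneg: "\<And>j. EC j \<ge> 0"
    and EC_mono: "mono EC"
    and EC_inf: "filterlim EC at_top sequentially"
    and ZC_fin: "summable (\<lambda>j. exp (- \<beta> * EC j))"
    and \<omega>_nonneg: "\<And>j. \<omega> j \<ge> 0" and \<omega>_sum: "(\<lambda>j. \<omega> j) sums 1"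
    and \<omega>'_nonneg: "\<And>j. \<omega>' j \<ge> 0" and \<omega>'_sum: "(\<lambda>j. \<omega>' j) sums 1"
    and energy: "summable (\<lambda>j. \<omega> j * EC j)" "(\<Sum>j. \<omega> j * EC j) \<le> Eb"
    and Eb_ge: "Eb \<ge> EC 0"
    and CTO_renyi: "\<forall>\<alpha>\<in>{0<..<1}.
       renyi_div \<alpha> (\<lambda>(j, i). \<omega> j * (exp (- \<beta> * ES i) / (\<Sum>l<m. exp (- \<beta> * ES l))))
                  (\<lambda>(j, i). (exp (- \<beta> * EC j) / (\<Sum>l. exp (- \<beta> * EC l)))
                            * (exp (- \<beta> * ES i) / (\<Sum>l<m. exp (- \<beta> * ES l))))
                  (UNIV \<times> {..<m})
       \<ge> renyi_div \<alpha> (\<lambda>(j, i). \<omega>' j * (if i = k then 1 else 0))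
                  (\<lambda>(j, i). (exp (- \<beta> * EC j) / (\<Sum>l. exp (- \<beta> * EC l)))
                            * (exp (- \<beta> * ES i) / (\<Sum>l<m. exp (- \<beta> * ES l))))
                  (UNIV \<times> {..<m})"
  shows "1/2 * (\<Sum>j. \<bar>\<omega> j - \<omega>' j\<bar>)
           \<ge> 1/2 * (fA ((\<Sum>l<m. exp (- \<beta> * ES l)) / exp (- \<beta> * ES k)))^2 * (epsC \<beta> EC Eb)^2
               / (\<Sum>l. exp (- \<beta> * EC l))
       \<and> 1/2 * (fA ((\<Sum>l<m. exp (- \<beta> * ES l)) / exp (- \<beta> * ES k)))^2 * (epsC \<beta> EC Eb)^2
               / (\<Sum>l. exp (- \<beta> * EC l)) > 0"
proof -
  define e where "e j = exp (- \<beta> * EC j)" for j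
  define ZC where "ZC = (\<Sum>l. e l)"
  define g where "g j = e j / ZC" for j
  define \<tau> where "\<tau> i = exp (- \<beta> * ES i) / (\<Sum>l<m. exp (- \<beta> * ES l))" for i
  define A where "A = (\<Sum>l<m. exp (- \<beta> * ES l)) / exp (- \<beta> * ES k)"
  have ZC: "0 < ZC" and g: "\<And>j. 0 < g j" "g sums 1"
    using normalized_weights[of e] ZC_fin unfolding g_def ZC_def e_def by auto
  have \<tau>: "\<And>i. 0 \<le> \<tau> i" "(\<Sum>i<m. \<tau> i) = 1" and A_ge: "2 \<le> A"
    using thermal_system_weights[OF _ m_ge k_max] beta_pos unfolding \<tau>_def A_def by auto
  have "\<tau> k = 1 / A" unfolding \<tau>_def A_def by simp
  then have \<tau>k: "0 < \<tau> k" "\<tau> k = 1 / A" using A_ge by simp_all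
  note overlap = bhatt_prob[OF \<omega>_nonneg \<omega>_sum g] bhatt_prob[OF \<omega>'_nonneg \<omega>'_sum g]
  have "bhatt \<omega> g \<le> sqrt (\<tau> k) * bhatt \<omega>' g"
    using bhatt_gain_from_renyi[OF \<tau> k_max(1) \<tau>k(1) less_imp_le[OF g(1)] \<omega>_nonneg overlap(1,2)
        \<omega>'_nonneg overlap(3,4)] CTO_renyi
    unfolding \<tau>_def g_def e_def ZC_def by simp
  then have gain: "sqrt A * bhatt \<omega> g \<le> bhatt \<omega>' g"
    using A_ge unfolding \<tau>k(2) by (simp add: real_sqrt_divide field_simps)
  have "epsC \<beta> EC Eb \<le> bhatt \<omega> e"
    unfolding e_def using beta_pos Eb_ge EC_nonneg[of 0]
    by (intro epsC_le_bhatt[OF _ \<omega>_nonneg \<omega>_sum EC_nonneg EC_mono EC_inf ZC_fin energy]) simp_all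
  also have "bhatt \<omega> e = sqrt ZC * bhatt \<omega> g"
    using bhatt_scale[of \<omega> e ZC] summable_sqrt_mult[OF \<omega>_nonneg _ _ ZC_fin] \<omega>_sum ZC
    unfolding g_def e_def by (simp add: sums_iff)
  finally have "epsC \<beta> EC Eb / sqrt ZC \<le> bhatt \<omega> g" using ZC by (simp add: divide_le_eq mult.commute)
  from distance_from_overlap_gain[OF A_ge gain this epsC_pos _ bhatt_gap_le_l1]
  have "(fA A)\<^sup>2 * (epsC \<beta> EC Eb)\<^sup>2 / ZC \<le> (\<Sum>j. \<bar>\<omega> j - \<omega>' j\<bar>)"
    using beta_pos EC_nonneg ZC \<omega>_nonneg \<omega>'_nonneg \<omega>_sum \<omega>'_sum g
    by (simp add: sums_iff less_imp_le)
  moreover have "0 < (fA A)\<^sup>2 * (epsC \<beta> EC Eb)\<^sup>2 / ZC"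
    using fA_pos[of A] A_ge epsC_pos[of \<beta> EC Eb] beta_pos EC_nonneg ZC by simp
  ultimately show ?thesis unfolding A_def ZC_def e_def by simp
qed

end
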